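(* Let $F^\sharp$ be a skew-symmetric endomorphism of a real vector space $V$ endowed with a non-degenerate inner product $g^\flat=\langle\,,\,\rangle$ of signature $\{p,q\}$ with $p$ or $q$ non-zero. Assume $F^\sharp\circ F^\sharp=\mu\,k\otimes\boldsymbol k$ with $k\in V$ non-zero and null and $\mu\neq0$. Suppose moreover that either (i) $V$ has Lorentzian signature, or (ii) $F^\sharp(\langle k\rangle^\perp)\subset\operatorname{span}(k)$. Then there exists $w\in V$, linearly independent of and orthogonal to $k$, such that $$F^\sharp=k\otimes\boldsymbol w-w\otimes\boldsymbol k,\qquad \mu=-\langle w,w\rangle.$$ Conversely, any $F^\sharp$ of this form with $k$ null and $w$ orthogonal to $k$ satisfies $F^\sharp\circ F^\sharp=-\langle w,w\rangle\,k\otimes\boldsymbol k$.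
   Context: Skew-symmetric: $\langle F^\sharp x,y\rangle=-\langle x,F^\sharp y\rangle$. $u\otimes\boldsymbol v$ denotes the linear map $x\mapsto u\langle v,x\rangle$. $\langle k\rangle^\perp=\{x\in V:\langle k,x\rangle=0\}$. *)

theory Defs
  imports "HOL-Analysis.Analysis"
begin

definition nondeg_inner :: "('a::euclidean_space \<Rightarrow> 'a \<Rightarrow> real) \<Rightarrow> bool" where
  "nondeg_inner B \<longleftrightarrow> bilinear B \<and> (\<forall>x y. B x y = B y x)
     \<and> (\<forall>x. (\<forall>y. B x y = 0) \<longrightarrow> x = 0)"

definition has_signature :: "('a::euclidean_space \<Rightarrow> 'a \<Rightarrow> real) \<Rightarrow> nat \<Rightarrow> nat \<Rightarrow> bool" where
  "has_signature B p q \<longleftrightarrow> (\<exists>P N. finite P \<and> finite N \<and> P \<inter> N = {}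
     \<and> independent (P \<union> N) \<and> span (P \<union> N) = UNIV
     \<and> card P = p \<and> card N = q
     \<and> (\<forall>x\<in>P. B x x = 1) \<and> (\<forall>x\<in>N. B x x = -1)
     \<and> (\<forall>x\<in>P \<union> N. \<forall>y\<in>P \<union> N. x \<noteq> y \<longrightarrow> B x y = 0))"

definition lorentzian :: "('a::euclidean_space \<Rightarrow> 'a \<Rightarrow> real) \<Rightarrow> bool" where
  "lorentzian B \<longleftrightarrow> (\<exists>n. has_signature B 1 n \<or> has_signature B n 1)"

definition skew_sym :: "('a::euclidean_space \<Rightarrow> 'a \<Rightarrow> real) \<Rightarrow> ('a \<Rightarrow> 'a) \<Rightarrow> bool" where
  "skew_sym B F \<longleftrightarrow> linear F \<and> (\<forall>x y. B (F x) y = - B x (F y))"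

definition tens :: "('a::euclidean_space \<Rightarrow> 'a \<Rightarrow> real) \<Rightarrow> 'a \<Rightarrow> 'a \<Rightarrow> 'a \<Rightarrow> 'a" where
  "tens B u v = (\<lambda>x. B v x *\<^sub>R u)"

end

theory Submission
  imports Defs
begin

text \<open>Since \<open>F \<circ> F = \<mu> k \<otimes> k\<close>, every vector in \<open>F(\<langle>k\<rangle>\<^sup>\<perp>)\<close> is null and orthogonal to \<open>k\<close>;
in Lorentzian signature such a vector is a multiple of \<open>k\<close>, because its difference with a
suitable multiple of \<open>k\<close> lies in a definite hyperplane and is null. So in both cases \<open>F\<close> maps
\<open>\<langle>k\<rangle>\<^sup>\<perp>\<close> into \<open>span k\<close>, and then \<open>F k = 0\<close> since \<open>F\<close> has square zero on \<open>k\<close>. Choosing \<open>u\<close> with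
\<open>\<langle>k,u\<rangle> = 1\<close> and decomposing \<open>x = (x - \<langle>k,x\<rangle> u) + \<langle>k,x\<rangle> u\<close>, skew-symmetry forces
\<open>F = k \<otimes> w - w \<otimes> k\<close> for \<open>w = - F u\<close>; evaluating \<open>F \<circ> F\<close> at \<open>u\<close> gives \<open>\<mu> = -\<langle>w,w\<rangle>\<close>.\<close>

lemma nondeg_innerD:
  assumes "nondeg_inner B"
  shows "bilinear B" and "B x y = B y x" and "(\<And>y. B x y = 0) \<Longrightarrow> x = 0"
  using assms by (auto simp: nondeg_inner_def)

lemma skew_sym_orthogonal_self:
  assumes "skew_sym B F" and "\<And>x y. B x y = B y x"
  shows "B x (F x) = 0"
proof -
  have "B (F x) x = - B x (F x)" using assms(1) by (simp add: skew_sym_def)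
  then show ?thesis using assms(2)[of "F x" x] by simp
qed

lemma bilinear_sum_scaleR_right:
  assumes "bilinear B"
  shows "B x (\<Sum>v\<in>N. c v *\<^sub>R v) = (\<Sum>v\<in>N. c v * B x v)"
proof -
  have "linear (B x)" using assms by (simp add: bilinear_def)
  then show ?thesis by (simp add: linear_sum linear_scale)
qed

lemma bilinear_sum_scaleR_left:
  assumes "bilinear B"
  shows "B (\<Sum>v\<in>N. c v *\<^sub>R v) x = (\<Sum>v\<in>N. c v * B v x)"
proof -
  have lin: "linear (\<lambda>y. B y x)" using assms by (simp add: bilinear_def)
  show ?thesis using linear_sum[OF lin, of "\<lambda>v. c v *\<^sub>R v" N] linear_scale[OF lin] by simp
qed

lemma null_in_span_of_definite_orthogonal_eq_0:
  fixes s :: real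
  assumes bil: "bilinear B" and fin: "finite N" and s: "s \<noteq> 0"
    and diag: "\<forall>x\<in>N. B x x = s" and orth: "\<forall>x\<in>N. \<forall>y\<in>N. x \<noteq> y \<longrightarrow> B x y = 0"
    and z: "z \<in> span N" and null: "B z z = 0"
  shows "z = 0"
proof -
  obtain c where zc: "z = (\<Sum>v\<in>N. c v *\<^sub>R v)" using z span_finite[OF fin] by auto
  have coord: "B x z = c x * s" if "x \<in> N" for x
  proof -
    have "B x z = (\<Sum>v\<in>N. if v = x then c x * s else 0)"
      unfolding zc bilinear_sum_scaleR_right[OF bil]
      by (rule sum.cong) (use that diag orth in auto)
    then show ?thesis using that fin by simp
  qed
  have "B z z = (\<Sum>v\<in>N. c v * B v z)"
    using bilinear_sum_scaleR_left[OF bil, of c N z] zc by metis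
  also have "\<dots> = (\<Sum>v\<in>N. (c v)\<^sup>2) * s"
    using coord by (simp add: sum_distrib_right power2_eq_square mult.assoc)
  finally have "(\<Sum>v\<in>N. (c v)\<^sup>2) * s = 0" using null by simp
  then have "\<forall>v\<in>N. (c v)\<^sup>2 = 0" using s fin by (simp add: sum_nonneg_eq_0_iff)
  then show ?thesis using zc by simp
qed

lemma null_orthogonal_in_span_of_definite_hyperplane:
  fixes s :: real
  assumes bil: "bilinear B" and sym: "\<And>x y. B x y = B y x"
    and fin: "finite N" and s: "s \<noteq> 0"
    and diag: "\<forall>x\<in>N. B x x = s" and orth: "\<forall>x\<in>N. \<forall>y\<in>N. x \<noteq> y \<longrightarrow> B x y = 0"
    and spanning: "span (insert e N) = UNIV"
    and k: "k \<noteq> 0" "B k k = 0" and v: "B v v = 0" "B k v = 0"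
  shows "v \<in> span {k}"
proof -
  note definite = null_in_span_of_definite_orthogonal_eq_0[OF bil fin s diag orth]
  obtain a where a: "k - a *\<^sub>R e \<in> span N" using span_breakdown_eq[of k e N] spanning by auto
  obtain b where b: "v - b *\<^sub>R e \<in> span N" using span_breakdown_eq[of v e N] spanning by auto
  have "b *\<^sub>R k - a *\<^sub>R v = b *\<^sub>R (k - a *\<^sub>R e) - a *\<^sub>R (v - b *\<^sub>R e)"
    by (simp add: algebra_simps)
  then have "b *\<^sub>R k - a *\<^sub>R v \<in> span N" using a b by (simp add: span_diff span_scale)
  moreover have "B (b *\<^sub>R k - a *\<^sub>R v) (b *\<^sub>R k - a *\<^sub>R v) = 0"
    using bil k v sym[of v k]
    by (simp add: bilinear_lsub bilinear_rsub bilinear_lmul bilinear_rmul)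
  ultimately have "b *\<^sub>R k - a *\<^sub>R v = 0" using definite by blast
  moreover have "a \<noteq> 0" using a definite k by auto
  ultimately have "v = (b / a) *\<^sub>R k" by (simp add: eq_vector_fraction_iff)
  then show ?thesis by (simp add: span_base span_scale)
qed

lemma lorentzian_obtains_definite_hyperplane:
  assumes "lorentzian B"
  obtains e N s where "finite N" "s \<noteq> 0" "\<forall>x\<in>N. B x x = s"
    "\<forall>x\<in>N. \<forall>y\<in>N. x \<noteq> y \<longrightarrow> B x y = 0" "span (insert e N) = UNIV"
proof -
  obtain n where "has_signature B 1 n \<or> has_signature B n 1"
    using assms by (auto simp: lorentzian_def)
  then show ?thesis
  proof
    assume "has_signature B 1 n"
    then obtain P N where "finite N" "card P = 1" "span (P \<union> N) = UNIV"
      "\<forall>x\<in>N. B x x = -1" "\<forall>x\<in>P \<union> N. \<forall>y\<in>P \<union> N. x \<noteq> y \<longrightarrow> B x y = 0"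
      unfolding has_signature_def by blast
    moreover obtain e where "P = {e}" using \<open>card P = 1\<close> card_1_singletonE by blast
    ultimately show ?thesis using that[of N "-1" e] by auto
  next
    assume "has_signature B n 1"
    then obtain P N where "finite P" "card N = 1" "span (P \<union> N) = UNIV"
      "\<forall>x\<in>P. B x x = 1" "\<forall>x\<in>P \<union> N. \<forall>y\<in>P \<union> N. x \<noteq> y \<longrightarrow> B x y = 0"
      unfolding has_signature_def by blast
    moreover obtain e where "N = {e}" using \<open>card N = 1\<close> card_1_singletonE by blast
    ultimately show ?thesis using that[of P 1 e] by auto
  qed
qed

lemma lorentzian_null_orthogonal_in_span:
  assumes "nondeg_inner B" and "lorentzian B"
    and "k \<noteq> 0" "B k k = 0" and "B v v = 0" "B k v = 0"
  shows "v \<in> span {k}"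
proof -
  obtain e N s where "finite N" "s \<noteq> 0" "\<forall>x\<in>N. B x x = s"
    "\<forall>x\<in>N. \<forall>y\<in>N. x \<noteq> y \<longrightarrow> B x y = 0" "span (insert e N) = UNIV"
    using lorentzian_obtains_definite_hyperplane[OF assms(2)] .
  then show ?thesis
    using null_orthogonal_in_span_of_definite_hyperplane nondeg_innerD[OF assms(1)] assms(3-)
    by metis
qed

lemma skew_image_quadratic_form:
  assumes "skew_sym B F" and bil: "bilinear B" and sym: "\<And>x y. B x y = B y x"
    and square: "\<And>x. F (F x) = (\<mu> * B k x) *\<^sub>R k"
  shows "B (F y) (F y) = - \<mu> * (B k y)\<^sup>2"
proof -
  have "B (F y) (F y) = - B y (F (F y))" using assms(1) by (simp add: skew_sym_def)
  then show ?thesis using bil sym[of y k] by (simp add: square bilinear_rmul power2_eq_square)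
qed

lemma linear_square_zero_eigenvector:
  assumes "linear F" and "F k \<in> span {k}" and "F (F k) = 0" and "k \<noteq> 0"
  shows "F k = 0"
proof -
  obtain c where c: "F k = c *\<^sub>R k" using assms(2) by (auto simp: span_singleton)
  then have "(c * c) *\<^sub>R k = 0" using assms(1,3) by (simp add: linear_scale)
  then show ?thesis using c assms(4) by simp
qed

lemma lorentzian_skew_maps_orthogonal_into_span:
  assumes inner: "nondeg_inner B" and lor: "lorentzian B" and skew: "skew_sym B F"
    and square: "\<And>x. F (F x) = (\<mu> * B k x) *\<^sub>R k" and k: "k \<noteq> 0" "B k k = 0"
  shows "F ` {x. B k x = 0} \<subseteq> span {k}"
proof -
  note bil = nondeg_innerD(1)[OF inner] and sym = nondeg_innerD(2)[OF inner]
  note quadratic = skew_image_quadratic_form[OF skew bil sym square]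
  note in_span = lorentzian_null_orthogonal_in_span[OF inner lor k]
  have "F k \<in> span {k}"
    using in_span quadratic[of k] skew_sym_orthogonal_self[OF skew sym] k by simp
  then have Fk: "F k = 0"
    using linear_square_zero_eigenvector[of F k] skew square[of k] k by (simp add: skew_sym_def)
  show ?thesis
  proof clarify
    fix y assume "B k y = 0"
    moreover have "B k (F y) = - B (F k) y" using skew by (simp add: skew_sym_def)
    ultimately show "F y \<in> span {k}"
      using in_span quadratic[of y] Fk bilinear_lzero[OF bil] by simp
  qed
qed

lemma skew_eq_tens_wedge:
  assumes bil: "bilinear B" and sym: "\<And>x y. B x y = B y x" and skew: "skew_sym B F"
    and image: "F ` {x. B k x = 0} \<subseteq> span {k}" and u: "B k u = 1"
  shows "F = (\<lambda>x. tens B k (- F u) x - tens B (- F u) k x)"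
proof
  fix x
  have lin: "linear F" and skewF: "\<And>x y. B (F x) y = - B x (F y)"
    using skew by (auto simp: skew_sym_def)
  define y where "y = x - B k x *\<^sub>R u"
  have "B k y = 0" unfolding y_def using u bil by (simp add: bilinear_rsub bilinear_rmul)
  then obtain c where c: "F y = c *\<^sub>R k" using image by (auto simp: span_singleton)
  have "c = B (F y) u" using c u bil sym[of u k] by (simp add: bilinear_lmul)
  also have "\<dots> = - B (F u) x"
    using skewF[of y u] skew_sym_orthogonal_self[OF skew sym, of u] bil sym[of x "F u"]
    unfolding y_def by (simp add: bilinear_lsub bilinear_lmul)
  finally have "F y = - B (F u) x *\<^sub>R k" using c by simp
  moreover have "F x = F y + B k x *\<^sub>R F u" unfolding y_def using lin by (simp add: linear_diff linear_scale)
  ultimately show "F x = tens B k (- F u) x - tens B (- F u) k x"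
    using bil by (simp add: tens_def bilinear_lneg)
qed

lemma tens_wedge_square:
  assumes "bilinear B" and sym: "\<And>x y. B x y = B y x"
    and "B k k = 0" and "B k w = 0"
  shows "(\<lambda>x. tens B k w x - tens B w k x) \<circ> (\<lambda>x. tens B k w x - tens B w k x)
     = (\<lambda>x. (- B w w) *\<^sub>R tens B k k x)"
  using assms sym[of w k]
  by (auto simp: tens_def bilinear_rsub bilinear_rmul algebra_simps)

lemma skew_square_null_tens_eq_wedge:
  assumes inner: "nondeg_inner B" and skew: "skew_sym B F"
    and k: "k \<noteq> 0" "B k k = 0" and \<mu>: "\<mu> \<noteq> 0"
    and square: "F \<circ> F = (\<lambda>x. \<mu> *\<^sub>R tens B k k x)"
    and image: "lorentzian B \<or> F ` {x. B k x = 0} \<subseteq> span {k}"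
  obtains w where "independent {k, w}" "k \<noteq> w" "B k w = 0"
    "F = (\<lambda>x. tens B k w x - tens B w k x)" "\<mu> = - B w w"
proof -
  note bil = nondeg_innerD(1)[OF inner] and sym = nondeg_innerD(2)[OF inner]
  have square': "F (F x) = (\<mu> * B k x) *\<^sub>R k" for x
    using fun_cong[OF square, of x] by (simp add: tens_def)
  have image': "F ` {x. B k x = 0} \<subseteq> span {k}"
    using image lorentzian_skew_maps_orthogonal_into_span[OF inner _ skew square' k] by blast
  have "F k = 0"
    using linear_square_zero_eigenvector[of F k] image' square'[of k] k skew by (auto simp: skew_sym_def)
  obtain y where "B k y \<noteq> 0" using nondeg_innerD(3)[OF inner, of k] k by blast
  define u where "u = (1 / B k y) *\<^sub>R y"
  have u: "B k u = 1" unfolding u_def using \<open>B k y \<noteq> 0\<close> bil by (simp add: bilinear_rmul)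
  define w where "w = - F u"
  have F: "F = (\<lambda>x. tens B k w x - tens B w k x)"
    unfolding w_def by (rule skew_eq_tens_wedge[OF bil sym skew image' u])
  have "B (F k) u = - B k (F u)" using skew by (simp add: skew_sym_def)
  then have kw: "B k w = 0"
    using \<open>F k = 0\<close> bilinear_lzero[OF bil] bil by (simp add: w_def bilinear_rneg)
  have "(F \<circ> F) u = (- B w w) *\<^sub>R tens B k k u"
    unfolding F by (rule fun_cong[OF tens_wedge_square[OF bil sym k(2) kw]])
  then have "\<mu> *\<^sub>R k = (- B w w) *\<^sub>R k" using square' u by (simp add: tens_def)
  then have "\<mu> = - B w w" using k by (metis scaleR_cancel_right)
  have "w \<notin> span {k}"
  proof
    assume "w \<in> span {k}"
    then obtain t where "w = t *\<^sub>R k" by (auto simp: span_singleton)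
    then have "F (F u) = 0" using F bil sym by (simp add: tens_def bilinear_lmul bilinear_rmul)
    then show False using square' u \<mu> k by simp
  qed
  moreover have "k \<notin> span {w}"
  proof
    assume "k \<in> span {w}"
    then obtain t where t: "k = t *\<^sub>R w" by (auto simp: span_singleton)
    then have "w = (1 / t) *\<^sub>R k" using k by auto
    then show False using \<open>w \<notin> span {k}\<close> by (simp add: span_base span_scale)
  qed
  moreover have "k \<noteq> w" and "w \<noteq> 0"
    using \<open>w \<notin> span {k}\<close> span_base[of k "{k}"] span_zero[of "{k}"] by auto
  ultimately have "independent {k, w}" by (simp add: independent_insert)
  then show ?thesis using that \<open>k \<noteq> w\<close> kw F \<open>\<mu> = - B w w\<close> by blast
qed

theorem mainTheorem14:
  fixes B :: "'a::euclidean_space \<Rightarrow> 'a \<Rightarrow> real" and p q :: nat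
  assumes inner: "nondeg_inner B"
    and sig: "has_signature B p q" and pq: "p \<noteq> 0 \<or> q \<noteq> 0"
  shows "(\<forall>(F::'a \<Rightarrow> 'a) k (\<mu>::real).
            skew_sym B F \<and> k \<noteq> 0 \<and> B k k = 0 \<and> \<mu> \<noteq> 0
            \<and> F \<circ> F = (\<lambda>x. \<mu> *\<^sub>R tens B k k x)
            \<and> (lorentzian B \<or> F ` {x. B k x = 0} \<subseteq> span {k})
          \<longrightarrow> (\<exists>w. independent {k, w} \<and> k \<noteq> w \<and> B k w = 0
                  \<and> F = (\<lambda>x. tens B k w x - tens B w k x) \<and> \<mu> = - B w w))
       \<and> (\<forall>(F::'a \<Rightarrow> 'a) k w.
            B k k = 0 \<and> B k w = 0 \<and> F = (\<lambda>x. tens B k w x - tens B w k x)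
          \<longrightarrow> F \<circ> F = (\<lambda>x. (- B w w) *\<^sub>R tens B k k x))"
proof (intro conjI allI impI)
  fix F k and \<mu> :: real
  assume "skew_sym B F \<and> k \<noteq> 0 \<and> B k k = 0 \<and> \<mu> \<noteq> 0
            \<and> F \<circ> F = (\<lambda>x. \<mu> *\<^sub>R tens B k k x)
            \<and> (lorentzian B \<or> F ` {x. B k x = 0} \<subseteq> span {k})"
  then show "\<exists>w. independent {k, w} \<and> k \<noteq> w \<and> B k w = 0
                  \<and> F = (\<lambda>x. tens B k w x - tens B w k x) \<and> \<mu> = - B w w"
    using skew_square_null_tens_eq_wedge[OF inner, of F k \<mu>] by blast
next
  fix F k w
  assume "B k k = 0 \<and> B k w = 0 \<and> F = (\<lambda>x. tens B k w x - tens B w k x)"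
  then show "F \<circ> F = (\<lambda>x. (- B w w) *\<^sub>R tens B k k x)"
    using tens_wedge_square nondeg_innerD(1,2)[OF inner] by blast
qed

end
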